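(* Let $N\ge 4$ and $\bm X^{(N)} := (1+\frac{1}{N-1})\bm I_N - \frac{1}{N-1}\bm 1\bm 1^\top$. Define $\bm Y^{(N)}\in\mathbb{R}^{N^2\times N^2}$ by $$Y^{(N)}_{(ij)(k\ell)} = \begin{cases} 1 & |\mathsf{odd}((ijk\ell))| = 0,\\ -\frac{1}{N-1} & |\mathsf{odd}((ijk\ell))| = 2,\\ \frac{3}{(N-1)(N-3)} & |\mathsf{odd}((ijk\ell))| = 4.\end{cases}$$ Then $\bm Y^{(N)}$ is a degree 4 pseudomoment matrix extending $\bm X^{(N)}$.
   Context: For a string $(ijk\ell)$ of symbols from $[N]$, $\mathsf{odd}((ijk\ell))$ is the set of symbols occurring an odd number of times in it (its size is always $0$, $2$ or $4$). A degree 4 pseudomoment matrix is a matrix $\bm Y \in \mathbb{R}^{N^2\times N^2}$, rows and columns indexed by pairs $(ij)\in[N]^2$ (lexicographically ordered), such that: (1) $\bm Y\succeq 0$; (2) $Y_{(ij)(kk)}$ does not depend on $k$; (3) $Y_{(ii)(ii)} = 1$ for all $i$; (4) $Y_{(ij)(k\ell)}$ is invariant under all permutations of the four indices $i,j,k,\ell$. Such $\bm Y$ extends $\bm X\in\mathbb{R}^{N\times N}_{\mathrm{sym}}$ if $Y_{(1i)(1j)} = X_{ij}$ for all $i,j$. *)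

theory Defs
  imports Complex_Main "HOL-Library.Multiset"
begin

text \<open>Symbols are taken from [N] = {1..N}. Matrices indexed by pairs of [N] are
  represented as functions on pairs (values outside [N]^2 are irrelevant).\<close>

definition odd_syms :: "nat \<Rightarrow> nat \<Rightarrow> nat \<Rightarrow> nat \<Rightarrow> nat set" where
  "odd_syms i j k l = {s \<in> {i, j, k, l}. odd (length (filter (\<lambda>t. t = s) [i, j, k, l]))}"

definition psd_pairs :: "nat \<Rightarrow> (nat \<times> nat \<Rightarrow> nat \<times> nat \<Rightarrow> real) \<Rightarrow> bool" where
  "psd_pairs N Y \<longleftrightarrow>
     (\<forall>p\<in>{1..N}\<times>{1..N}. \<forall>q\<in>{1..N}\<times>{1..N}. Y p q = Y q p) \<and>
     (\<forall>v :: nat \<times> nat \<Rightarrow> real.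
        (\<Sum>p\<in>{1..N}\<times>{1..N}. \<Sum>q\<in>{1..N}\<times>{1..N}. v p * Y p q * v q) \<ge> 0)"

definition deg4_pseudomoment :: "nat \<Rightarrow> (nat \<times> nat \<Rightarrow> nat \<times> nat \<Rightarrow> real) \<Rightarrow> bool" where
  "deg4_pseudomoment N Y \<longleftrightarrow>
     psd_pairs N Y \<and>
     (\<forall>i\<in>{1..N}. \<forall>j\<in>{1..N}. \<forall>k\<in>{1..N}. \<forall>k'\<in>{1..N}. Y (i, j) (k, k) = Y (i, j) (k', k')) \<and>
     (\<forall>i\<in>{1..N}. Y (i, i) (i, i) = 1) \<and>
     (\<forall>i\<in>{1..N}. \<forall>j\<in>{1..N}. \<forall>k\<in>{1..N}. \<forall>l\<in>{1..N}. \<forall>a b c d.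
        mset [a, b, c, d] = mset [i, j, k, l] \<longrightarrow> Y (a, b) (c, d) = Y (i, j) (k, l))"

definition extends :: "nat \<Rightarrow> (nat \<times> nat \<Rightarrow> nat \<times> nat \<Rightarrow> real) \<Rightarrow> (nat \<Rightarrow> nat \<Rightarrow> real) \<Rightarrow> bool" where
  "extends N Y X \<longleftrightarrow> (\<forall>i\<in>{1..N}. \<forall>j\<in>{1..N}. Y (1, i) (1, j) = X i j)"

definition Xcor :: "nat \<Rightarrow> nat \<Rightarrow> nat \<Rightarrow> real" where
  "Xcor N i j = (1 + 1 / (real N - 1)) * (if i = j then 1 else 0) - 1 / (real N - 1)"

definition Ycor :: "nat \<Rightarrow> nat \<times> nat \<Rightarrow> nat \<times> nat \<Rightarrow> real" where
  "Ycor N p q = (case (p, q) of ((i, j), (k, l)) \<Rightarrow>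
     (if card (odd_syms i j k l) = 0 then 1
      else if card (odd_syms i j k l) = 2 then - 1 / (real N - 1)
      else 3 / ((real N - 1) * (real N - 3))))"

end

theory Submission
  imports Defs
begin

text \<open>Since \<open>Ycor N\<close> only depends on the size of the odd set, its quadratic form sees a vector
  \<open>v\<close> on pairs only through the trace \<open>T\<close> of its diagonal and through the symmetric zero-diagonal
  matrix \<open>x = v + v\<^sup>T\<close> off the diagonal. With \<open>P\<close> the total of \<open>x\<close>, \<open>R\<close> the sum of squared row
  sums of \<open>x\<close> and \<open>X\<close> the sum of its squared entries, the form equals
  \<open>T\<^sup>2 + bTP + gP\<^sup>2/4 + (b - g)R + (1 - 2b + g)X/2\<close>, where \<open>b\<close> and \<open>g\<close> are the values taken on odd
  sets of size 2 and 4. For the values in \<open>Ycor N\<close> this is \<open>(T + bP/2)\<^sup>2\<close> plus a positive multiple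
  of \<open>P\<^sup>2 + (N - 1)(N - 2)X - 2(N - 1)R\<close>, and that quantity is, up to a positive factor, the squared
  norm of the off-diagonal part of \<open>x\<close> minus its orthogonal projection onto the matrices
  \<open>(c\<^sub>a + c\<^sub>b)\<^sub>a\<^sub>\<noteq>\<^sub>b\<close>.\<close>

lemma sum_split_diagonal:
  fixes f :: "'a \<Rightarrow> 'a \<Rightarrow> 'b::comm_monoid_add"
  assumes "finite A"
  shows "(\<Sum>i\<in>A. \<Sum>j\<in>A. f i j) = (\<Sum>i\<in>A. f i i) + (\<Sum>i\<in>A. \<Sum>j\<in>A. if i = j then 0 else f i j)"
proof -
  have "(\<Sum>j\<in>A. f i j) = f i i + (\<Sum>j\<in>A. if i = j then 0 else f i j)" if "i \<in> A" for i
    using assms that by (simp add: sum.If_cases Diff_eq sum.remove)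
  then show ?thesis by (simp add: sum.distrib)
qed

lemma diagonal_le_sum_pairs:
  fixes f :: "'a \<Rightarrow> 'a \<Rightarrow> real"
  assumes "finite A" and "\<And>a b. 0 \<le> f a b"
  shows "(\<Sum>a\<in>A. f a a) \<le> (\<Sum>a\<in>A. \<Sum>b\<in>A. f a b)"
  using assms by (intro sum_mono member_le_sum) auto

lemma degree_square_sum_bound:
  fixes x :: "'a \<Rightarrow> 'a \<Rightarrow> real"
  assumes A: "finite A" "3 \<le> card A"
    and x_diag: "\<And>a. x a a = 0" and x_sym: "\<And>a b. x b a = x a b"
  defines "n \<equiv> real (card A)"
  shows "2 * (n - 1) * (\<Sum>a\<in>A. (\<Sum>b\<in>A. x a b)\<^sup>2)
    \<le> (n - 1) * (n - 2) * (\<Sum>a\<in>A. \<Sum>b\<in>A. (x a b)\<^sup>2) + (\<Sum>a\<in>A. \<Sum>b\<in>A. x a b)\<^sup>2"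
proof -
  define p where "p a = (\<Sum>b\<in>A. x a b)" for a
  define P where "P = (\<Sum>a\<in>A. p a)"
  define R where "R = (\<Sum>a\<in>A. (p a)\<^sup>2)"
  define X where "X = (\<Sum>a\<in>A. \<Sum>b\<in>A. (x a b)\<^sup>2)"
  define \<alpha> where "\<alpha> = (n - 1) * (n - 2)"
  define \<beta> where "\<beta> = n - 1"
  define Z where "Z a b = \<alpha> * x a b - \<beta> * (p a + p b) + P" for a b
  have xp_left: "(\<Sum>a\<in>A. \<Sum>b\<in>A. x a b * p a) = R"
    by (simp add: R_def p_def power2_eq_square sum_distrib_right)
  have xp_right: "(\<Sum>a\<in>A. \<Sum>b\<in>A. x a b * p b) = R"
    by (subst sum.swap) (simp add: R_def p_def power2_eq_square sum_distrib_right x_sym)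
  have sums: "(\<Sum>a\<in>A. \<Sum>b\<in>A. (x a b)\<^sup>2) = X" "(\<Sum>a\<in>A. \<Sum>b\<in>A. (p a)\<^sup>2) = n * R"
    "(\<Sum>a\<in>A. \<Sum>b\<in>A. (p b)\<^sup>2) = n * R" "(\<Sum>a\<in>A. \<Sum>b\<in>A. (1::real)) = n\<^sup>2"
    "(\<Sum>a\<in>A. \<Sum>b\<in>A. x a b) = P" "(\<Sum>a\<in>A. \<Sum>b\<in>A. p a) = n * P" "(\<Sum>a\<in>A. \<Sum>b\<in>A. p b) = n * P"
    by (simp_all add: X_def R_def P_def n_def power2_eq_square sum_distrib_left flip: p_def)
  have sum_pp: "(\<Sum>a\<in>A. p a * (\<Sum>b\<in>A. p b)) = P\<^sup>2"
    by (simp add: P_def power2_eq_square sum_distrib_right)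
  have "(\<Sum>a\<in>A. \<Sum>b\<in>A. (Z a b)\<^sup>2) = (\<Sum>a\<in>A. \<Sum>b\<in>A.
      \<alpha>\<^sup>2 * (x a b)\<^sup>2 + \<beta>\<^sup>2 * (p a)\<^sup>2 + \<beta>\<^sup>2 * (p b)\<^sup>2 + 2 * \<beta>\<^sup>2 * (p a * p b) + P\<^sup>2 * 1
      - 2 * \<alpha> * \<beta> * (x a b * p a) - 2 * \<alpha> * \<beta> * (x a b * p b) + 2 * \<alpha> * P * x a b
      - 2 * \<beta> * P * p a - 2 * \<beta> * P * p b)"
    by (intro sum.cong refl) (simp add: Z_def power2_eq_square algebra_simps)
  also have "\<dots> = \<alpha>\<^sup>2 * X + 2 * \<beta>\<^sup>2 * n * R + 2 * \<beta>\<^sup>2 * P\<^sup>2 + P\<^sup>2 * n\<^sup>2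
      - 4 * \<alpha> * \<beta> * R + 2 * \<alpha> * P\<^sup>2 - 4 * \<beta> * n * P\<^sup>2"
    by (simp only: sum.distrib sum_subtractf sum_distrib_left[symmetric] sums sum_pp xp_left xp_right)
      (simp add: power2_eq_square algebra_simps)
  finally have full: "(\<Sum>a\<in>A. \<Sum>b\<in>A. (Z a b)\<^sup>2) = \<alpha>\<^sup>2 * X + 2 * \<beta>\<^sup>2 * n * R + 2 * \<beta>\<^sup>2 * P\<^sup>2
      + P\<^sup>2 * n\<^sup>2 - 4 * \<alpha> * \<beta> * R + 2 * \<alpha> * P\<^sup>2 - 4 * \<beta> * n * P\<^sup>2" .
  have "(\<Sum>a\<in>A. (Z a a)\<^sup>2) = (\<Sum>a\<in>A. 4 * \<beta>\<^sup>2 * (p a)\<^sup>2 - 4 * \<beta> * P * p a + P\<^sup>2)"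
    by (intro sum.cong refl) (simp add: Z_def x_diag power2_eq_square algebra_simps)
  also have "\<dots> = 4 * \<beta>\<^sup>2 * R - 4 * \<beta> * P\<^sup>2 + n * P\<^sup>2"
    by (simp add: sum.distrib sum_subtractf R_def P_def n_def power2_eq_square
        flip: sum_distrib_left sum_distrib_right)
  finally have diag: "(\<Sum>a\<in>A. (Z a a)\<^sup>2) = 4 * \<beta>\<^sup>2 * R - 4 * \<beta> * P\<^sup>2 + n * P\<^sup>2" .
  have "0 \<le> (\<Sum>a\<in>A. \<Sum>b\<in>A. (Z a b)\<^sup>2) - (\<Sum>a\<in>A. (Z a a)\<^sup>2)"
    using diagonal_le_sum_pairs[OF A(1), of "\<lambda>a b. (Z a b)\<^sup>2"] by simp
  also have "\<dots> = \<alpha> * (\<alpha> * X + P\<^sup>2 - 2 * \<beta> * R)"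
    unfolding full diag \<alpha>_def \<beta>_def by (simp add: power2_eq_square algebra_simps)
  finally have "0 \<le> \<alpha> * (\<alpha> * X + P\<^sup>2 - 2 * \<beta> * R)" .
  moreover have "0 < \<alpha>"
    using A(2) by (simp add: \<alpha>_def n_def)
  ultimately have "2 * \<beta> * R \<le> \<alpha> * X + P\<^sup>2"
    by (simp add: zero_le_mult_iff)
  then show ?thesis
    unfolding X_def P_def R_def p_def \<alpha>_def \<beta>_def by simp
qed

definition sym_offdiag :: "(nat \<times> nat \<Rightarrow> real) \<Rightarrow> nat \<Rightarrow> nat \<Rightarrow> real" where
  "sym_offdiag v i j = (if i = j then 0 else v (i, j) + v (j, i))"

lemma sym_offdiag_diag [simp]: "sym_offdiag v i i = 0"
  by (simp add: sym_offdiag_def)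

lemma sym_offdiag_commute: "sym_offdiag v j i = sym_offdiag v i j"
  by (simp add: sym_offdiag_def)

lemma sum_pairs_symmetrize:
  fixes v :: "nat \<times> nat \<Rightarrow> real"
  assumes "finite A" and F_sym: "\<And>i j. F j i = F i j"
  shows "(\<Sum>i\<in>A. \<Sum>j\<in>A. v (i, j) * F i j)
    = (\<Sum>i\<in>A. v (i, i) * F i i) + (\<Sum>i\<in>A. \<Sum>j\<in>A. sym_offdiag v i j * F i j) / 2"
proof -
  let ?u = "\<lambda>i j. if i = j then 0 else v (i, j) * F i j"
  have "(\<Sum>i\<in>A. \<Sum>j\<in>A. ?u j i) = (\<Sum>i\<in>A. \<Sum>j\<in>A. ?u i j)"
    by (rule sum.swap)
  moreover have "sym_offdiag v i j * F i j = ?u i j + ?u j i" for i j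
    using F_sym[of i j] by (simp add: sym_offdiag_def algebra_simps)
  ultimately have "(\<Sum>i\<in>A. \<Sum>j\<in>A. sym_offdiag v i j * F i j) = 2 * (\<Sum>i\<in>A. \<Sum>j\<in>A. ?u i j)"
    by (simp add: sum.distrib)
  then show ?thesis
    using sum_split_diagonal[OF assms(1), of "\<lambda>i j. v (i, j) * F i j"] by simp
qed

lemma Collect_mem_insert:
  "{s \<in> insert a A. P s} = (if P a then insert a {s \<in> A. P s} else {s \<in> A. P s})"
  by auto

lemma card_odd_syms:
  "card (odd_syms i j k l) =
     (if i = j then (if k = l then 0 else 2)
      else if k = l then 2
      else if {i, j} = {k, l} then 0
      else if i = k \<or> i = l \<or> j = k \<or> j = l then 2 else 4)"
  unfolding odd_syms_def Collect_mem_insert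
  by (cases "i = j"; cases "i = k"; cases "i = l"; cases "j = k"; cases "j = l"; cases "k = l")
     (simp_all add: doubleton_eq_iff card_insert_if)

lemma odd_syms_eq_mset: "odd_syms i j k l = {s \<in> set_mset (mset [i, j, k, l]). odd (count (mset [i, j, k, l]) s)}"
  unfolding odd_syms_def count_mset count_list_eq_length_filter by (auto simp: eq_commute)

definition odd_pattern :: "real \<Rightarrow> real \<Rightarrow> nat \<Rightarrow> nat \<Rightarrow> nat \<Rightarrow> nat \<Rightarrow> real" where
  "odd_pattern b g i j k l =
     (if card (odd_syms i j k l) = 0 then 1 else if card (odd_syms i j k l) = 2 then b else g)"

lemma odd_pattern_eq:
  "odd_pattern b g i j k l =
     (if i = j then (if k = l then 1 else b)
      else if k = l then b
      else g + (b - g) * (of_bool (i = k) + of_bool (i = l) + of_bool (j = k) + of_bool (j = l))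
        + (1 - 2 * b + g) * (of_bool (i = k) * of_bool (j = l) + of_bool (i = l) * of_bool (j = k)))"
  unfolding odd_pattern_def card_odd_syms
  by (cases "i = j"; cases "i = k"; cases "i = l"; cases "j = k"; cases "j = l"; cases "k = l")
     (simp_all add: doubleton_eq_iff algebra_simps)

lemma odd_pattern_swap_right: "odd_pattern b g i j l k = odd_pattern b g i j k l"
  unfolding odd_pattern_eq by (simp add: algebra_simps)

lemma odd_pattern_row_sum:
  fixes v :: "nat \<times> nat \<Rightarrow> real"
  assumes A: "finite A" "i \<in> A" "j \<in> A"
  defines "T \<equiv> \<Sum>a\<in>A. v (a, a)"
    and "P \<equiv> \<Sum>a\<in>A. \<Sum>b\<in>A. sym_offdiag v a b"
  shows "(\<Sum>k\<in>A. \<Sum>l\<in>A. v (k, l) * odd_pattern b g i j k l)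
    = (if i = j then T + b * P / 2
       else b * T + g * P / 2 + (b - g) * ((\<Sum>a\<in>A. sym_offdiag v i a) + (\<Sum>a\<in>A. sym_offdiag v j a))
         + (1 - 2 * b + g) * sym_offdiag v i j)"
    (is "?lhs = ?rhs")
proof -
  let ?x = "sym_offdiag v"
  have off: "?x k l * odd_pattern b g i j k l = ?x k l * (if i = j then b
      else g + (b - g) * (of_bool (i = k) + of_bool (i = l) + of_bool (j = k) + of_bool (j = l))
        + (1 - 2 * b + g) * (of_bool (i = k) * of_bool (j = l) + of_bool (i = l) * of_bool (j = k)))" for i j k l
    by (cases "k = l") (simp_all add: odd_pattern_eq)
  have col: "(\<Sum>k\<in>A. ?x k a) = (\<Sum>k\<in>A. ?x a k)" for a
    by (simp add: sym_offdiag_commute)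
  have touching: "(\<Sum>k\<in>A. \<Sum>l\<in>A. ?x k l * (of_bool (i = k) + of_bool (i = l) + of_bool (j = k) + of_bool (j = l)))
      = 2 * ((\<Sum>a\<in>A. ?x i a) + (\<Sum>a\<in>A. ?x j a))"
    using A col by (simp add: distrib_left sum.distrib sum_distrib_right[symmetric] mult.assoc[symmetric])
  have matching: "(\<Sum>k\<in>A. \<Sum>l\<in>A. ?x k l * (of_bool (i = k) * of_bool (j = l) + of_bool (i = l) * of_bool (j = k)))
      = 2 * ?x i j"
    using A sym_offdiag_commute[of v i j]
    by (simp add: distrib_left sum.distrib sum_distrib_right[symmetric] mult.assoc[symmetric])
  have diag: "odd_pattern b g i j k k = (if i = j then 1 else b)" for i j k
    by (simp add: odd_pattern_eq)
  have "?lhs = (\<Sum>k\<in>A. v (k, k) * odd_pattern b g i j k k) + (\<Sum>k\<in>A. \<Sum>l\<in>A. ?x k l * odd_pattern b g i j k l) / 2"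
    by (rule sum_pairs_symmetrize[OF A(1) odd_pattern_swap_right])
  also have "\<dots> = ?rhs"
  proof (cases "i = j")
    case True
    then show ?thesis
      by (simp add: off diag T_def P_def sum_distrib_left[symmetric] sum_distrib_right[symmetric])
  next
    case False
    have "(\<Sum>k\<in>A. \<Sum>l\<in>A. ?x k l * (g
          + (b - g) * (of_bool (i = k) + of_bool (i = l) + of_bool (j = k) + of_bool (j = l))
          + (1 - 2 * b + g) * (of_bool (i = k) * of_bool (j = l) + of_bool (i = l) * of_bool (j = k))))
        = g * P + (b - g) * (2 * ((\<Sum>a\<in>A. ?x i a) + (\<Sum>a\<in>A. ?x j a))) + (1 - 2 * b + g) * (2 * ?x i j)"
      unfolding touching[symmetric] matching[symmetric] P_def
      by (simp add: distrib_left sum.distrib sum_distrib_left ac_simps)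
    with False show ?thesis
      by (simp add: off diag T_def P_def sum_distrib_left[symmetric] sum_distrib_right[symmetric])
  qed
  finally show ?thesis .
qed

lemma odd_pattern_quadratic_form:
  fixes v :: "nat \<times> nat \<Rightarrow> real"
  assumes A: "finite A"
  defines "T \<equiv> \<Sum>a\<in>A. v (a, a)"
    and "P \<equiv> \<Sum>a\<in>A. \<Sum>b\<in>A. sym_offdiag v a b"
    and "R \<equiv> \<Sum>a\<in>A. (\<Sum>b\<in>A. sym_offdiag v a b)\<^sup>2"
    and "X \<equiv> \<Sum>a\<in>A. \<Sum>b\<in>A. (sym_offdiag v a b)\<^sup>2"
  shows "(\<Sum>i\<in>A. \<Sum>j\<in>A. \<Sum>k\<in>A. \<Sum>l\<in>A. v (i, j) * odd_pattern b g i j k l * v (k, l))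
    = T\<^sup>2 + b * T * P + g * P\<^sup>2 / 4 + (b - g) * R + (1 - 2 * b + g) * X / 2"
proof -
  let ?x = "sym_offdiag v"
  let ?p = "\<lambda>a. \<Sum>b\<in>A. ?x a b"
  define row where "row i j = (if i = j then T + b * P / 2
    else b * T + g * P / 2 + (b - g) * (?p i + ?p j) + (1 - 2 * b + g) * ?x i j)" for i j
  have row_sym: "row j i = row i j" for i j
    by (simp add: row_def sym_offdiag_commute add.commute)
  have x_row: "?x i j * row i j = ?x i j * (b * T + g * P / 2 + (b - g) * (?p i + ?p j) + (1 - 2 * b + g) * ?x i j)" for i j
    by (simp add: row_def)
  have "(\<Sum>i\<in>A. \<Sum>j\<in>A. \<Sum>k\<in>A. \<Sum>l\<in>A. v (i, j) * odd_pattern b g i j k l * v (k, l))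
      = (\<Sum>i\<in>A. \<Sum>j\<in>A. v (i, j) * row i j)"
  proof (intro sum.cong refl)
    fix i j assume "i \<in> A" "j \<in> A"
    then have "row i j = (\<Sum>k\<in>A. \<Sum>l\<in>A. v (k, l) * odd_pattern b g i j k l)"
      using odd_pattern_row_sum[OF A] unfolding row_def T_def P_def by simp
    then show "(\<Sum>k\<in>A. \<Sum>l\<in>A. v (i, j) * odd_pattern b g i j k l * v (k, l)) = v (i, j) * row i j"
      by (simp add: sum_distrib_left ac_simps)
  qed
  also have "\<dots> = (\<Sum>i\<in>A. v (i, i) * row i i) + (\<Sum>i\<in>A. \<Sum>j\<in>A. ?x i j * row i j) / 2"
    by (rule sum_pairs_symmetrize[OF A row_sym])
  also have "\<dots> = T * (T + b * P / 2) + (P * (b * T + g * P / 2) + (b - g) * (2 * R) + (1 - 2 * b + g) * X) / 2"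
  proof -
    have "(\<Sum>i\<in>A. \<Sum>j\<in>A. ?x i j * ?p j) = R"
      unfolding R_def power2_eq_square
      by (subst sum.swap) (simp add: sum_distrib_right sym_offdiag_commute)
    moreover have "(\<Sum>i\<in>A. \<Sum>j\<in>A. ?x i j * ?p i) = R"
      unfolding R_def power2_eq_square by (simp add: sum_distrib_right)
    moreover have "(\<Sum>i\<in>A. \<Sum>j\<in>A. ?x i j * (C + (b - g) * (?p i + ?p j) + (1 - 2 * b + g) * ?x i j))
        = P * C + (b - g) * ((\<Sum>i\<in>A. \<Sum>j\<in>A. ?x i j * ?p i) + (\<Sum>i\<in>A. \<Sum>j\<in>A. ?x i j * ?p j))
          + (1 - 2 * b + g) * X" for C
      unfolding X_def power2_eq_square
      by (simp add: P_def distrib_left sum.distrib sum_distrib_left sum_distrib_right ac_simps)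
    moreover have "(\<Sum>i\<in>A. v (i, i) * row i i) = T * (T + b * P / 2)"
      by (simp add: row_def T_def sum_distrib_right)
    ultimately show ?thesis
      unfolding x_row by simp
  qed
  also have "\<dots> = T\<^sup>2 + b * T * P + g * P\<^sup>2 / 4 + (b - g) * R + (1 - 2 * b + g) * X / 2"
    by (simp add: power2_eq_square field_simps)
  finally show ?thesis .
qed

lemma odd_pattern_form_sos:
  fixes n T P R X :: real
  assumes "n \<noteq> 1" "n \<noteq> 3"
  defines "b \<equiv> - 1 / (n - 1)" and "g \<equiv> 3 / ((n - 1) * (n - 3))"
  shows "T\<^sup>2 + b * T * P + g * P\<^sup>2 / 4 + (b - g) * R + (1 - 2 * b + g) * X / 2
    = (T + b * P / 2)\<^sup>2 + n / (2 * (n - 1)\<^sup>2 * (n - 3)) * (P\<^sup>2 + (n - 1) * (n - 2) * X - 2 * (n - 1) * R)"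
proof -
  define \<kappa> where "\<kappa> = n / (2 * (n - 1)\<^sup>2 * (n - 3))"
  have "n - 1 \<noteq> 0" "n - 3 \<noteq> 0"
    using assms by simp_all
  then have coeffs: "g - b\<^sup>2 = 4 * \<kappa>" "b - g = - 2 * (n - 1) * \<kappa>"
      "1 - 2 * b + g = 2 * (n - 1) * (n - 2) * \<kappa>"
    unfolding b_def g_def \<kappa>_def
    by (simp_all add: divide_simps del: eq_iff_diff_eq_0) (simp_all add: algebra_simps power2_eq_square)
  have "T\<^sup>2 + b * T * P + g * P\<^sup>2 / 4 + (b - g) * R + (1 - 2 * b + g) * X / 2
      = (T + b * P / 2)\<^sup>2 + (g - b\<^sup>2) * P\<^sup>2 / 4 + (b - g) * R + (1 - 2 * b + g) * X / 2"
    by (simp add: power2_eq_square field_simps)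
  also have "\<dots> = (T + b * P / 2)\<^sup>2 + \<kappa> * (P\<^sup>2 + (n - 1) * (n - 2) * X - 2 * (n - 1) * R)"
    unfolding coeffs by (simp add: field_simps)
  finally show ?thesis
    unfolding \<kappa>_def .
qed

lemma Ycor_eq_odd_pattern:
  "Ycor N (i, j) (k, l) = odd_pattern (- 1 / (real N - 1)) (3 / ((real N - 1) * (real N - 3))) i j k l"
  by (simp add: Ycor_def odd_pattern_def)

lemma Ycor_perm: "mset [a, b, c, d] = mset [i, j, k, l] \<Longrightarrow> Ycor N (a, b) (c, d) = Ycor N (i, j) (k, l)"
  unfolding Ycor_def odd_syms_eq_mset by (simp only: prod.case)

lemma Ycor_commute: "Ycor N q p = Ycor N p q"
  by (cases p; cases q) (auto intro: Ycor_perm simp: add_mset_commute)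

lemma Ycor_diag: "Ycor N (i, j) (k, k) = Ycor N (i, j) (k', k')"
  by (simp add: Ycor_eq_odd_pattern odd_pattern_eq)

lemma Ycor_diag_diag: "Ycor N (i, i) (i, i) = 1"
  by (simp add: Ycor_eq_odd_pattern odd_pattern_eq)

lemma Ycor_extends_Xcor: "Ycor N (1, i) (1, j) = Xcor N i j"
  by (cases "i = 1"; cases "j = 1"; cases "i = j") (simp_all add: Ycor_eq_odd_pattern odd_pattern_eq Xcor_def field_simps)

lemma Ycor_quadratic_form_nonneg:
  fixes v :: "nat \<times> nat \<Rightarrow> real"
  assumes "4 \<le> N"
  shows "0 \<le> (\<Sum>p\<in>{1..N}\<times>{1..N}. \<Sum>q\<in>{1..N}\<times>{1..N}. v p * Ycor N p q * v q)"
proof -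
  let ?A = "{1..N}"
  let ?x = "sym_offdiag v"
  define n where "n = real N"
  define T where "T = (\<Sum>a\<in>?A. v (a, a))"
  define P where "P = (\<Sum>a\<in>?A. \<Sum>b\<in>?A. ?x a b)"
  define R where "R = (\<Sum>a\<in>?A. (\<Sum>b\<in>?A. ?x a b)\<^sup>2)"
  define X where "X = (\<Sum>a\<in>?A. \<Sum>b\<in>?A. (?x a b)\<^sup>2)"
  have n: "4 \<le> n" "n \<noteq> 1" "n \<noteq> 3"
    using assms by (simp_all add: n_def)
  have "(\<Sum>p\<in>?A\<times>?A. \<Sum>q\<in>?A\<times>?A. v p * Ycor N p q * v q)
      = (\<Sum>i\<in>?A. \<Sum>j\<in>?A. \<Sum>k\<in>?A. \<Sum>l\<in>?A.
           v (i, j) * odd_pattern (- 1 / (n - 1)) (3 / ((n - 1) * (n - 3))) i j k l * v (k, l))"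
    by (simp add: sum.cartesian_product' Ycor_eq_odd_pattern n_def)
  also have "\<dots> = (T + - 1 / (n - 1) * P / 2)\<^sup>2
      + n / (2 * (n - 1)\<^sup>2 * (n - 3)) * (P\<^sup>2 + (n - 1) * (n - 2) * X - 2 * (n - 1) * R)"
    unfolding odd_pattern_quadratic_form[OF finite_atLeastAtMost] T_def P_def R_def X_def
    by (rule odd_pattern_form_sos[OF n(2,3)])
  finally have form: "(\<Sum>p\<in>?A\<times>?A. \<Sum>q\<in>?A\<times>?A. v p * Ycor N p q * v q) = \<dots>" .
  have "2 * (n - 1) * R \<le> (n - 1) * (n - 2) * X + P\<^sup>2"
    using degree_square_sum_bound[OF finite_atLeastAtMost, of 1 N ?x] assms
    by (simp add: R_def X_def P_def n_def sym_offdiag_commute)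
  then have "0 \<le> P\<^sup>2 + (n - 1) * (n - 2) * X - 2 * (n - 1) * R"
    by simp
  moreover have "0 \<le> n / (2 * (n - 1)\<^sup>2 * (n - 3))"
    using n by simp
  ultimately show ?thesis
    unfolding form by (intro add_nonneg_nonneg mult_nonneg_nonneg zero_le_power2)
qed

theorem corollary6:
  fixes N :: nat
  assumes "N \<ge> 4"
  shows "deg4_pseudomoment N (Ycor N) \<and> extends N (Ycor N) (Xcor N)"
proof -
  have "psd_pairs N (Ycor N)"
    unfolding psd_pairs_def using Ycor_commute Ycor_quadratic_form_nonneg[OF assms] by blast
  then show ?thesis
    unfolding deg4_pseudomoment_def extends_def
    using Ycor_diag Ycor_diag_diag Ycor_perm Ycor_extends_Xcor by blast
qed

end
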